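(* Consider the lattice Boltzmann scheme described in the context, viewed formally as depending on the single parameter $\Delta t\to0$ (with $\lambda$, $e_j$, $M$, $G$, $s_k$ fixed). Define the conservation defect $$\theta^k=\partial_t m^k_{\rm eq}+\sum_{\beta=1}^d\sum_{j=0}^J M^k_j v_j^\beta\,\partial_\beta f^j_{\rm eq}=\sum_{j=0}^J M^k_j\Big(\partial_t f^j_{\rm eq}+\sum_{\beta=1}^d v_j^\beta\partial_\beta f^j_{\rm eq}\Big),\quad 0\le k\le J.$$ Then for $d+1\le k\le J$, $$m^k=m^k_{\rm eq}-\frac{\Delta t}{s_k}\theta^k+O(\Delta t^2),\qquad m^k_*=m^k_{\rm eq}-\Big(\frac1{s_k}-1\Big)\Delta t\,\theta^k+O(\Delta t^2),$$ and for $0\le j\le J$, $1\le\beta\le d$, $$\partial_\beta f^j_*=\partial_\beta f^j_{\rm eq}-\Delta t\sum_{k=d+1}^J\Big(\frac1{s_k}-1\Big)(M^{-1})^j_k\,\partial_\beta\theta^k+O(\Delta t^2).$$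
   Context: Let $d\ge1$ be the space dimension, $J\ge d$ an integer, and $e_0,\dots,e_J\in\mathbb{R}^d$ fixed vectors. Let $\Delta x>0$, $\Delta t>0$ with $\lambda=\Delta x/\Delta t$ fixed, and set $v_j=\lambda e_j$, with components $v_j^\alpha$. Let $M=(M^k_j)_{0\le k,j\le J}$ be a fixed invertible real matrix with $M^0_j=1$ and $M^\alpha_j=v_j^\alpha$ for $1\le\alpha\le d$; $(M^{-1})^j_k$ denotes the entries of its inverse. Let $G:\mathbb{R}^{d+1}\to\mathbb{R}^{J+1}$ be a fixed smooth map with $\sum_j G^j(W)=W^0$ and $\sum_j v_j^\alpha G^j(W)=W^\alpha$. Let $s_k\in(0,2]$, $d+1\le k\le J$, be fixed. The scheme: densities $f^j(x,t)$; moments $m^k=\sum_j M^k_j f^j$; $\rho=m^0$, $q^\alpha=m^\alpha$, $W=(\rho,q^1,\dots,q^d)$; $f^j_{\rm eq}=G^j(W)$, $m^k_{\rm eq}=\sum_j M^k_j f^j_{\rm eq}$. Collision: $m^i_*=m^i$ for $0\le i\le d$, $m^k_*=(1-s_k)m^k+s_k m^k_{\rm eq}$ for $k\ge d+1$; $f^j_*=\sum_k (M^{-1})^j_k m^k_*$. Advection: $f^j(x,t+\Delta t)=f^j_*(x-v_j\Delta t,t)$. Here $\partial_\beta=\partial/\partial x_\beta$. Formal framework: all quantities are smooth functions of $(x,t)$ satisfying these relations identically and are expanded by Taylor's formula in $\Delta t$; $O(\Delta t^n)$ denotes a remainder of order $\Delta t^n$ as $\Delta t\to0$, derivatives of remainders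 being of the same order. *)

theory Defs
  imports "HOL-Analysis.Analysis"
begin

definition dirD :: "'a::euclidean_space \<Rightarrow> ('a \<Rightarrow> real) \<Rightarrow> 'a \<Rightarrow> real" where
  "dirD b g y = deriv (\<lambda>s. g (y + s *\<^sub>R b)) 0"

definition iterD :: "'a::euclidean_space list \<Rightarrow> ('a \<Rightarrow> real) \<Rightarrow> 'a \<Rightarrow> real" where
  "iterD bs g = foldr dirD bs g"

definition smooth_fun :: "('a::euclidean_space \<Rightarrow> real) \<Rightarrow> bool" where
  "smooth_fun g \<longleftrightarrow> (\<forall>bs. set bs \<subseteq> Basis \<longrightarrow>
      continuous_on UNIV (iterD bs g) \<and>
      (\<forall>b\<in>Basis. \<forall>y. (\<lambda>s. iterD bs g (y + s *\<^sub>R b)) differentiable (at 0)))"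

definition bigO :: "nat \<Rightarrow> (real \<Rightarrow> 'a::euclidean_space \<Rightarrow> real) \<Rightarrow> bool" where
  "bigO n R \<longleftrightarrow> (\<forall>bs. set bs \<subseteq> Basis \<longrightarrow>
      (\<exists>C h0. 0 < h0 \<and> (\<forall>h y. 0 < h \<and> h \<le> h0 \<longrightarrow> \<bar>iterD bs (R h) y\<bar> \<le> C * h ^ n)))"

text \<open>Points of space-time are pairs p = (x, t) with x in R^d (type real^'d) and t real.\<close>

definition pt :: "((real^'d::finite) \<times> real \<Rightarrow> real) \<Rightarrow> (real^'d) \<times> real \<Rightarrow> real" where
  "pt g = dirD (0, 1) g"

definition px :: "'d::finite \<Rightarrow> ((real^'d) \<times> real \<Rightarrow> real) \<Rightarrow> (real^'d) \<times> real \<Rightarrow> real" where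
  "px \<beta> g = dirD (axis \<beta> 1, 0) g"

text \<open>Parameters: J (number of velocities minus one), M, Minv (its inverse), G, s,
  v (velocities v_j), iota (enumeration of the d space directions by 1..d, so that
  moment number alpha corresponds to direction iota alpha), f (densities f h j p).\<close>

definition mom :: "nat \<Rightarrow> (nat \<Rightarrow> nat \<Rightarrow> real) \<Rightarrow> (real \<Rightarrow> nat \<Rightarrow> (real^'d::finite) \<times> real \<Rightarrow> real)
    \<Rightarrow> real \<Rightarrow> nat \<Rightarrow> (real^'d) \<times> real \<Rightarrow> real" where
  "mom J M f h k p = (\<Sum>j\<le>J. M k j * f h j p)"

definition Wvar :: "nat \<Rightarrow> (nat \<Rightarrow> nat \<Rightarrow> real) \<Rightarrow> (nat \<Rightarrow> 'd::finite)
    \<Rightarrow> (real \<Rightarrow> nat \<Rightarrow> (real^'d) \<times> real \<Rightarrow> real) \<Rightarrow> real \<Rightarrow> (real^'d) \<times> real \<Rightarrow> real \<times> (real^'d)" where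
  "Wvar J M \<iota> f h p = (mom J M f h 0 p,
      (\<chi> \<beta>. mom J M f h (the_inv_into {1..CARD('d)} \<iota> \<beta>) p))"

definition feq :: "nat \<Rightarrow> (nat \<Rightarrow> nat \<Rightarrow> real) \<Rightarrow> (nat \<Rightarrow> real \<times> (real^'d::finite) \<Rightarrow> real)
    \<Rightarrow> (nat \<Rightarrow> 'd) \<Rightarrow> (real \<Rightarrow> nat \<Rightarrow> (real^'d) \<times> real \<Rightarrow> real)
    \<Rightarrow> real \<Rightarrow> nat \<Rightarrow> (real^'d) \<times> real \<Rightarrow> real" where
  "feq J M G \<iota> f h j p = G j (Wvar J M \<iota> f h p)"

definition meq :: "nat \<Rightarrow> (nat \<Rightarrow> nat \<Rightarrow> real) \<Rightarrow> (nat \<Rightarrow> real \<times> (real^'d::finite) \<Rightarrow> real)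
    \<Rightarrow> (nat \<Rightarrow> 'd) \<Rightarrow> (real \<Rightarrow> nat \<Rightarrow> (real^'d) \<times> real \<Rightarrow> real)
    \<Rightarrow> real \<Rightarrow> nat \<Rightarrow> (real^'d) \<times> real \<Rightarrow> real" where
  "meq J M G \<iota> f h k p = (\<Sum>j\<le>J. M k j * feq J M G \<iota> f h j p)"

definition mstar :: "nat \<Rightarrow> (nat \<Rightarrow> nat \<Rightarrow> real) \<Rightarrow> (nat \<Rightarrow> real \<times> (real^'d::finite) \<Rightarrow> real)
    \<Rightarrow> (nat \<Rightarrow> real) \<Rightarrow> (nat \<Rightarrow> 'd) \<Rightarrow> (real \<Rightarrow> nat \<Rightarrow> (real^'d) \<times> real \<Rightarrow> real)
    \<Rightarrow> real \<Rightarrow> nat \<Rightarrow> (real^'d) \<times> real \<Rightarrow> real" where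
  "mstar J M G s \<iota> f h k p =
     (if k \<le> CARD('d) then mom J M f h k p
      else (1 - s k) * mom J M f h k p + s k * meq J M G \<iota> f h k p)"

definition fstar :: "nat \<Rightarrow> (nat \<Rightarrow> nat \<Rightarrow> real) \<Rightarrow> (nat \<Rightarrow> nat \<Rightarrow> real)
    \<Rightarrow> (nat \<Rightarrow> real \<times> (real^'d::finite) \<Rightarrow> real)
    \<Rightarrow> (nat \<Rightarrow> real) \<Rightarrow> (nat \<Rightarrow> 'd) \<Rightarrow> (real \<Rightarrow> nat \<Rightarrow> (real^'d) \<times> real \<Rightarrow> real)
    \<Rightarrow> real \<Rightarrow> nat \<Rightarrow> (real^'d) \<times> real \<Rightarrow> real" where
  "fstar J M Minv G s \<iota> f h j p = (\<Sum>k\<le>J. Minv j k * mstar J M G s \<iota> f h k p)"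

definition theta :: "nat \<Rightarrow> (nat \<Rightarrow> nat \<Rightarrow> real) \<Rightarrow> (nat \<Rightarrow> real \<times> (real^'d::finite) \<Rightarrow> real)
    \<Rightarrow> (nat \<Rightarrow> real^'d) \<Rightarrow> (nat \<Rightarrow> 'd) \<Rightarrow> (real \<Rightarrow> nat \<Rightarrow> (real^'d) \<times> real \<Rightarrow> real)
    \<Rightarrow> real \<Rightarrow> nat \<Rightarrow> (real^'d) \<times> real \<Rightarrow> real" where
  "theta J M G v \<iota> f h k p = (\<Sum>j\<le>J. M k j *
      (pt (feq J M G \<iota> f h j) p + (\<Sum>\<beta>\<in>UNIV. v j $ \<beta> * px \<beta> (feq J M G \<iota> f h j) p)))"

end

theory Submission
  imports Defs
begin

text \<open>
  Write h for \<Delta>t. Along characteristics the advection step reads f_star(p) = f(p + h (v, 1)),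
  so a second order Taylor expansion gives
  m_star - m = h \<Sum>_j M_kj (\<partial>_t + v_j \<cdot> \<nabla>) f_j + O(h^2). Hence m_star - m = O(h); as
  m_star - m = s_k (m_eq - m) for the relaxed moments and m_eq = m for the conserved ones, also
  f_eq - f = O(h). Replacing f by f_eq under the transport derivative therefore costs only
  O(h^2), so m_star - m = h \<theta> + O(h^2), and the three expansions follow by solving the
  relaxation relation for m and m_star and applying M^-1.
\<close>

section \<open>Calculus of smooth functions via partial derivatives\<close>

lemma iterD_Nil [simp]: "iterD [] F = F"
  by (simp add: iterD_def)

lemma iterD_Cons [simp]: "iterD (b # bs) F = dirD b (iterD bs F)"
  by (simp add: iterD_def)

lemma iterD_append: "iterD (bs @ cs) F = iterD bs (iterD cs F)"
  by (simp add: iterD_def)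

lemma smooth_fun_iterD:
  assumes "smooth_fun F" "set cs \<subseteq> Basis"
  shows "smooth_fun (iterD cs F)"
  using assms unfolding smooth_fun_def by (auto simp: iterD_append[symmetric])

lemma smooth_fun_dirD:
  assumes "smooth_fun F" "b \<in> Basis"
  shows "smooth_fun (dirD b F)"
  using smooth_fun_iterD[OF assms(1), of "[b]"] assms(2) by simp

lemma smooth_fun_continuous_iterD:
  assumes "smooth_fun F" "set bs \<subseteq> Basis"
  shows "continuous_on UNIV (iterD bs F)"
  using assms unfolding smooth_fun_def by blast

lemma dirD_has_real_derivative:
  assumes "smooth_fun F" "b \<in> Basis"
  shows "((\<lambda>s. F (y + s *\<^sub>R b)) has_real_derivative dirD b F (y + s0 *\<^sub>R b)) (at s0)"
proof -
  have "(\<lambda>s. F ((y + s0 *\<^sub>R b) + s *\<^sub>R b)) differentiable (at 0)"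
    using assms unfolding smooth_fun_def by (metis iterD_Nil empty_subsetI empty_set)
  then have "((\<lambda>s. F ((y + s0 *\<^sub>R b) + s *\<^sub>R b)) has_real_derivative dirD b F (y + s0 *\<^sub>R b)) (at 0)"
    unfolding dirD_def using DERIV_deriv_iff_real_differentiable by blast
  moreover have "(\<lambda>s. F ((y + s0 *\<^sub>R b) + s *\<^sub>R b)) = (\<lambda>s. F (y + (s + s0) *\<^sub>R b))"
    by (simp add: algebra_simps)
  ultimately show ?thesis
    using DERIV_shift[of "\<lambda>s. F (y + s *\<^sub>R b)" _ 0 s0] by simp
qed

lemma dirD_has_real_derivative_0:
  assumes "smooth_fun F" "b \<in> Basis"
  shows "((\<lambda>s. F (y + s *\<^sub>R b)) has_real_derivative dirD b F y) (at 0)"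
  using dirD_has_real_derivative[OF assms, of y 0] by simp

lemma iterD_shift: "iterD bs (\<lambda>p. F (p + a)) = (\<lambda>p. iterD bs F (p + a))"
  by (induction bs) (simp_all add: dirD_def algebra_simps)

lemma iterD_zero: "iterD bs (\<lambda>p. 0) = (\<lambda>p. 0)"
  by (induction bs) (auto simp: dirD_def)

lemma dirD_add:
  assumes "smooth_fun F" "smooth_fun G" "b \<in> Basis"
  shows "dirD b (\<lambda>p. F p + G p) = (\<lambda>p. dirD b F p + dirD b G p)"
  using DERIV_imp_deriv[OF DERIV_add[OF dirD_has_real_derivative_0[OF assms(1,3)]
        dirD_has_real_derivative_0[OF assms(2,3)]]]
  by (simp add: dirD_def fun_eq_iff)

lemma dirD_cmult:
  assumes "smooth_fun F" "b \<in> Basis"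
  shows "dirD b (\<lambda>p. c * F p) = (\<lambda>p. c * dirD b F p)"
  using DERIV_imp_deriv[OF DERIV_cmult[OF dirD_has_real_derivative_0[OF assms]]]
  by (simp add: dirD_def fun_eq_iff)

lemma iterD_add:
  assumes "smooth_fun F" "smooth_fun G" "set bs \<subseteq> Basis"
  shows "iterD bs (\<lambda>p. F p + G p) = (\<lambda>p. iterD bs F p + iterD bs G p)"
  using assms(3)
  by (induction bs) (simp_all add: dirD_add smooth_fun_iterD assms(1,2))

lemma iterD_cmult:
  assumes "smooth_fun F" "set bs \<subseteq> Basis"
  shows "iterD bs (\<lambda>p. c * F p) = (\<lambda>p. c * iterD bs F p)"
  using assms(2)
  by (induction bs) (simp_all add: dirD_cmult smooth_fun_iterD assms(1))

lemma smooth_fun_zero: "smooth_fun (\<lambda>p. 0)"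
  unfolding smooth_fun_def iterD_zero by auto

lemma smooth_fun_shift:
  assumes "smooth_fun F"
  shows "smooth_fun (\<lambda>p. F (p + a))"
  unfolding smooth_fun_def iterD_shift
proof (intro allI impI conjI ballI)
  fix bs :: "'a list"
  assume bs: "set bs \<subseteq> Basis"
  show "continuous_on UNIV (\<lambda>p. iterD bs F (p + a))"
    by (rule continuous_on_compose2[OF smooth_fun_continuous_iterD[OF assms bs]])
      (auto intro!: continuous_intros)
  fix b y
  assume b: "b \<in> (Basis :: 'a set)"
  have "(\<lambda>s. iterD bs F ((y + a) + s *\<^sub>R b)) differentiable (at 0)"
    using assms bs b unfolding smooth_fun_def by blast
  then show "(\<lambda>s. iterD bs F (y + s *\<^sub>R b + a)) differentiable (at 0)"
    by (simp add: algebra_simps)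
qed

lemma smooth_fun_add:
  assumes "smooth_fun F" "smooth_fun G"
  shows "smooth_fun (\<lambda>p. F p + G p)"
  using assms unfolding smooth_fun_def
  by (auto simp: iterD_add[OF assms] intro!: continuous_intros differentiable_add)

lemma smooth_fun_cmult:
  assumes "smooth_fun F"
  shows "smooth_fun (\<lambda>p. c * F p)"
  using assms unfolding smooth_fun_def
  by (auto simp: iterD_cmult[OF assms] intro!: continuous_intros differentiable_mult)

lemma smooth_fun_diff:
  assumes "smooth_fun F" "smooth_fun G"
  shows "smooth_fun (\<lambda>p. F p - G p)"
  using smooth_fun_add[OF assms(1) smooth_fun_cmult[OF assms(2), of "-1"]] by simp

lemma smooth_fun_sum:
  assumes "finite I" "\<And>i. i \<in> I \<Longrightarrow> smooth_fun (F i)"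
  shows "smooth_fun (\<lambda>p. \<Sum>i\<in>I. F i p)"
  using assms by (induction I rule: finite_induct) (auto intro: smooth_fun_add smooth_fun_zero)

lemma iterD_diff:
  assumes "smooth_fun F" "smooth_fun G" "set bs \<subseteq> Basis"
  shows "iterD bs (\<lambda>p. F p - G p) = (\<lambda>p. iterD bs F p - iterD bs G p)"
  using iterD_add[OF assms(1) smooth_fun_cmult[OF assms(2), of "-1"] assms(3)]
    iterD_cmult[OF assms(2,3), of "-1"] by simp

lemma iterD_sum:
  assumes "finite I" "\<And>i. i \<in> I \<Longrightarrow> smooth_fun (F i)" "set bs \<subseteq> Basis"
  shows "iterD bs (\<lambda>p. \<Sum>i\<in>I. F i p) = (\<lambda>p. \<Sum>i\<in>I. iterD bs (F i) p)"
  using assms(1,2)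
proof (induction I rule: finite_induct)
  case empty
  then show ?case by (simp add: iterD_zero)
next
  case (insert a S)
  then show ?case
    by (simp add: iterD_add smooth_fun_sum assms(3))
qed

lemma dirD_diff:
  assumes "smooth_fun F" "smooth_fun G" "b \<in> Basis"
  shows "dirD b (\<lambda>p. F p - G p) = (\<lambda>p. dirD b F p - dirD b G p)"
  using iterD_diff[OF assms(1,2), where bs = "[b]"] assms(3) by simp

lemma dirD_sum:
  assumes "finite I" "\<And>i. i \<in> I \<Longrightarrow> smooth_fun (F i)" "b \<in> Basis"
  shows "dirD b (\<lambda>p. \<Sum>i\<in>I. F i p) = (\<lambda>p. \<Sum>i\<in>I. dirD b (F i) p)"
  using iterD_sum[OF assms(1,2), where bs = "[b]"] assms(3) by simp

section \<open>Symmetry of second partial derivatives\<close>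

lemma mixed_difference_eq_dirD_dirD:
  fixes F :: "'a::euclidean_space \<Rightarrow> real"
  assumes sm: "smooth_fun F" and a: "a \<in> Basis" and b: "b \<in> Basis" and k: "0 < k"
  obtains \<sigma> \<tau> where "0 < \<sigma>" "\<sigma> < k" "0 < \<tau>" "\<tau> < k"
    "F (p + k *\<^sub>R a + k *\<^sub>R b) - F (p + k *\<^sub>R a) - F (p + k *\<^sub>R b) + F p
       = k\<^sup>2 * dirD b (dirD a F) (p + \<sigma> *\<^sub>R a + \<tau> *\<^sub>R b)"
proof -
  define \<phi> where "\<phi> s = F ((p + k *\<^sub>R b) + s *\<^sub>R a) - F (p + s *\<^sub>R a)" for s
  define \<phi>' where "\<phi>' s = dirD a F ((p + k *\<^sub>R b) + s *\<^sub>R a) - dirD a F (p + s *\<^sub>R a)" for s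
  have "DERIV \<phi> s :> \<phi>' s" for s
    unfolding \<phi>_def \<phi>'_def by (intro DERIV_diff dirD_has_real_derivative[OF sm a])
  then obtain \<sigma> where \<sigma>: "0 < \<sigma>" "\<sigma> < k" "\<phi> k - \<phi> 0 = k * \<phi>' \<sigma>"
    using MVT2[OF k, of \<phi> \<phi>'] by auto
  define \<psi> where "\<psi> t = dirD a F ((p + \<sigma> *\<^sub>R a) + t *\<^sub>R b)" for t
  have "DERIV \<psi> t :> dirD b (dirD a F) ((p + \<sigma> *\<^sub>R a) + t *\<^sub>R b)" for t
    unfolding \<psi>_def by (rule dirD_has_real_derivative[OF smooth_fun_dirD[OF sm a] b])
  then obtain \<tau> where \<tau>: "0 < \<tau>" "\<tau> < k"
      "\<psi> k - \<psi> 0 = k * dirD b (dirD a F) ((p + \<sigma> *\<^sub>R a) + \<tau> *\<^sub>R b)"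
    using MVT2[OF k, of \<psi> "\<lambda>t. dirD b (dirD a F) ((p + \<sigma> *\<^sub>R a) + t *\<^sub>R b)"] by auto
  have "\<phi>' \<sigma> = \<psi> k - \<psi> 0"
    unfolding \<phi>'_def \<psi>_def by (simp add: algebra_simps)
  moreover have "\<phi> k - \<phi> 0 = F (p + k *\<^sub>R a + k *\<^sub>R b) - F (p + k *\<^sub>R a) - F (p + k *\<^sub>R b) + F p"
    unfolding \<phi>_def by (simp add: algebra_simps)
  ultimately show thesis
    using that \<sigma> \<tau> by (simp add: power2_eq_square)
qed

lemma continuous_eq_if_values_meet_nearby:
  fixes G1 G2 :: "'a::metric_space \<Rightarrow> real"
  assumes "isCont G1 p" "isCont G2 p"
    and meet: "\<And>d. 0 < d \<Longrightarrow> \<exists>q q'. dist q p < d \<and> dist q' p < d \<and> G1 q = G2 q'"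
  shows "G1 p = G2 p"
proof (rule ccontr)
  assume "G1 p \<noteq> G2 p"
  define e where "e = \<bar>G1 p - G2 p\<bar> / 2"
  have e: "0 < e"
    using \<open>G1 p \<noteq> G2 p\<close> by (simp add: e_def)
  obtain d1 where d1: "0 < d1" "\<And>x. dist x p < d1 \<Longrightarrow> dist (G1 x) (G1 p) < e"
    using assms(1) e unfolding continuous_at_eps_delta by blast
  obtain d2 where d2: "0 < d2" "\<And>x. dist x p < d2 \<Longrightarrow> dist (G2 x) (G2 p) < e"
    using assms(2) e unfolding continuous_at_eps_delta by blast
  obtain q q' where "dist q p < min d1 d2" "dist q' p < min d1 d2" "G1 q = G2 q'"
    using meet[of "min d1 d2"] d1 d2 by auto
  moreover have "\<bar>G1 q - G1 p\<bar> < e" "\<bar>G2 q' - G2 p\<bar> < e"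
    using d1(2) d2(2) \<open>dist q p < min d1 d2\<close> \<open>dist q' p < min d1 d2\<close>
    by (auto simp: dist_real_def)
  ultimately show False
    unfolding e_def by (auto simp: abs_if split: if_splits)
qed

lemma mixed_partials_meet_nearby:
  fixes F :: "'a::euclidean_space \<Rightarrow> real"
  assumes sm: "smooth_fun F" and a: "a \<in> Basis" and b: "b \<in> Basis" and "0 < d"
  shows "\<exists>q q'. dist q p < d \<and> dist q' p < d \<and> dirD a (dirD b F) q = dirD b (dirD a F) q'"
proof -
  define k where "k = d / 2"
  have k: "0 < k"
    using \<open>0 < d\<close> by (simp add: k_def)
  have close: "dist (p + \<sigma> *\<^sub>R u + \<tau> *\<^sub>R w) p < d"
    if "u \<in> Basis" "w \<in> Basis" "0 < \<sigma>" "\<sigma> < k" "0 < \<tau>" "\<tau> < k" for u w :: 'a and \<sigma> \<tau>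
  proof -
    have "dist (p + \<sigma> *\<^sub>R u + \<tau> *\<^sub>R w) p = norm (\<sigma> *\<^sub>R u + \<tau> *\<^sub>R w)"
      by (simp add: dist_norm)
    also have "\<dots> \<le> norm (\<sigma> *\<^sub>R u) + norm (\<tau> *\<^sub>R w)"
      by (rule norm_triangle_ineq)
    also have "\<dots> = \<sigma> + \<tau>"
      using that by simp
    finally show ?thesis
      using that unfolding k_def by linarith
  qed
  obtain \<sigma> \<tau> where \<sigma>\<tau>: "0 < \<sigma>" "\<sigma> < k" "0 < \<tau>" "\<tau> < k"
    "F (p + k *\<^sub>R b + k *\<^sub>R a) - F (p + k *\<^sub>R b) - F (p + k *\<^sub>R a) + F p
       = k\<^sup>2 * dirD a (dirD b F) (p + \<sigma> *\<^sub>R b + \<tau> *\<^sub>R a)"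
    using mixed_difference_eq_dirD_dirD[OF sm b a k] .
  obtain \<sigma>' \<tau>' where \<sigma>\<tau>': "0 < \<sigma>'" "\<sigma>' < k" "0 < \<tau>'" "\<tau>' < k"
    "F (p + k *\<^sub>R a + k *\<^sub>R b) - F (p + k *\<^sub>R a) - F (p + k *\<^sub>R b) + F p
       = k\<^sup>2 * dirD b (dirD a F) (p + \<sigma>' *\<^sub>R a + \<tau>' *\<^sub>R b)"
    using mixed_difference_eq_dirD_dirD[OF sm a b k] .
  have "p + k *\<^sub>R b + k *\<^sub>R a = p + k *\<^sub>R a + k *\<^sub>R b"
    by (simp add: algebra_simps)
  then have "dirD a (dirD b F) (p + \<sigma> *\<^sub>R b + \<tau> *\<^sub>R a) = dirD b (dirD a F) (p + \<sigma>' *\<^sub>R a + \<tau>' *\<^sub>R b)"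
    using \<sigma>\<tau>(5) \<sigma>\<tau>'(5) k by (simp add: algebra_simps)
  then show ?thesis
    using close[OF b a \<sigma>\<tau>(1-4)] close[OF a b \<sigma>\<tau>'(1-4)] by blast
qed

lemma dirD_commute:
  fixes F :: "'a::euclidean_space \<Rightarrow> real"
  assumes sm: "smooth_fun F" and a: "a \<in> Basis" and b: "b \<in> Basis"
  shows "dirD a (dirD b F) = dirD b (dirD a F)"
proof
  fix p
  have "isCont (dirD a (dirD b F)) p" "isCont (dirD b (dirD a F)) p"
    using smooth_fun_continuous_iterD[OF sm, of "[a, b]"] smooth_fun_continuous_iterD[OF sm, of "[b, a]"]
      a b by (simp_all add: continuous_on_eq_continuous_at)
  then show "dirD a (dirD b F) p = dirD b (dirD a F) p"
    using continuous_eq_if_values_meet_nearby mixed_partials_meet_nearby[OF sm a b] by blast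
qed

lemma iterD_dirD_commute:
  fixes F :: "'a::euclidean_space \<Rightarrow> real"
  assumes "smooth_fun F" "b \<in> Basis" "set bs \<subseteq> Basis"
  shows "iterD bs (dirD b F) = dirD b (iterD bs F)"
  using assms(3)
proof (induction bs)
  case Nil
  then show ?case by simp
next
  case (Cons c cs)
  then show ?case
    using dirD_commute[OF smooth_fun_iterD[OF assms(1)], of cs c b] assms(2) by simp
qed

section \<open>Taylor estimates along coordinate directions\<close>

lemma dirD_line_lipschitz:
  fixes F :: "'a::euclidean_space \<Rightarrow> real"
  assumes sm: "smooth_fun F" and b: "b \<in> Basis" and K: "\<And>y. \<bar>dirD b F y\<bar> \<le> K"
  shows "\<bar>F (p + a *\<^sub>R b) - F p\<bar> \<le> K * \<bar>a\<bar>"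
proof -
  define D where "D m = (if m = 0 then (\<lambda>s. F (p + s *\<^sub>R b)) else (\<lambda>s. dirD b F (p + s *\<^sub>R b)))"
    for m :: nat
  have "\<forall>m t. m < 1 \<and> \<bar>t\<bar> \<le> \<bar>a\<bar> \<longrightarrow> DERIV (D m) t :> D (Suc m) t"
    by (simp add: D_def dirD_has_real_derivative[OF sm b])
  then obtain t where "F (p + a *\<^sub>R b) = F p + dirD b F (p + t *\<^sub>R b) * a"
    using Maclaurin_bi_le[of D _ 1 a] by (auto simp: D_def)
  then show ?thesis
    using K[of "p + t *\<^sub>R b"] by (simp add: abs_mult mult_right_mono)
qed

lemma dirD_line_taylor:
  fixes F :: "'a::euclidean_space \<Rightarrow> real"
  assumes sm: "smooth_fun F" and b: "b \<in> Basis" and K: "\<And>y. \<bar>dirD b (dirD b F) y\<bar> \<le> K"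
  shows "\<bar>F (p + a *\<^sub>R b) - F p - a * dirD b F p\<bar> \<le> K / 2 * a\<^sup>2"
proof -
  define D where "D m = (if m = 0 then (\<lambda>s. F (p + s *\<^sub>R b))
      else if m = 1 then (\<lambda>s. dirD b F (p + s *\<^sub>R b)) else (\<lambda>s. dirD b (dirD b F) (p + s *\<^sub>R b)))"
    for m :: nat
  have "\<forall>m t. m < 2 \<and> \<bar>t\<bar> \<le> \<bar>a\<bar> \<longrightarrow> DERIV (D m) t :> D (Suc m) t"
    by (auto simp: D_def less_2_cases_iff dirD_has_real_derivative[OF sm b]
        dirD_has_real_derivative[OF smooth_fun_dirD[OF sm b] b])
  then obtain t where "F (p + a *\<^sub>R b) = F p + dirD b F p * a + dirD b (dirD b F) (p + t *\<^sub>R b) / 2 * a\<^sup>2"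
    using Maclaurin_bi_le[of D _ 2 a] by (auto simp: D_def numeral_2_eq_2)
  then have "\<bar>F (p + a *\<^sub>R b) - F p - a * dirD b F p\<bar> = \<bar>dirD b (dirD b F) (p + t *\<^sub>R b)\<bar> / 2 * a\<^sup>2"
    by (simp add: abs_mult)
  also have "\<dots> \<le> K / 2 * a\<^sup>2"
    using K[of "p + t *\<^sub>R b"] by (intro mult_right_mono divide_right_mono) auto
  finally show ?thesis .
qed

lemma dirD_sum_shift_bound:
  fixes F :: "'a::euclidean_space \<Rightarrow> real"
  assumes sm: "smooth_fun F" and dir: "dir ` S \<subseteq> Basis" and b: "b \<in> Basis"
    and K: "\<And>i y. i \<in> S \<Longrightarrow> \<bar>dirD b (dirD (dir i) F) y\<bar> \<le> K"
  shows "\<bar>\<Sum>i\<in>S. c i * (dirD (dir i) F (p + a *\<^sub>R b) - dirD (dir i) F p)\<bar> \<le> (\<Sum>i\<in>S. \<bar>c i\<bar>) * (K * \<bar>a\<bar>)"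
proof -
  have "\<bar>c i * (dirD (dir i) F (p + a *\<^sub>R b) - dirD (dir i) F p)\<bar> \<le> \<bar>c i\<bar> * (K * \<bar>a\<bar>)" if "i \<in> S" for i
  proof -
    have "dir i \<in> Basis"
      using dir that by auto
    then have "\<bar>dirD (dir i) F (p + a *\<^sub>R b) - dirD (dir i) F p\<bar> \<le> K * \<bar>a\<bar>"
      using K that by (intro dirD_line_lipschitz[OF smooth_fun_dirD[OF sm] b])
    then show ?thesis
      by (simp add: abs_mult mult_left_mono)
  qed
  then show ?thesis
    unfolding sum_distrib_right by (intro order_trans[OF sum_abs] sum_mono)
qed

lemma taylor_estimate_dirD_sum:
  fixes F :: "'a::euclidean_space \<Rightarrow> real"
  assumes sm: "smooth_fun F" and "finite I" and "dir ` I \<subseteq> Basis"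
    and "\<And>i j y. i \<in> I \<Longrightarrow> j \<in> I \<Longrightarrow> \<bar>dirD (dir i) (dirD (dir j) F) y\<bar> \<le> K"
  shows "\<bar>F (p + h *\<^sub>R (\<Sum>i\<in>I. c i *\<^sub>R dir i)) - F p - h * (\<Sum>i\<in>I. c i * dirD (dir i) F p)\<bar>
           \<le> K * (\<Sum>i\<in>I. \<bar>c i\<bar>)\<^sup>2 * h\<^sup>2"
  using assms(2-)
proof (induction I arbitrary: p rule: finite_induct)
  case empty
  then show ?case by simp
next
  case (insert a S p)
  define A where "A = (\<Sum>i\<in>S. \<bar>c i\<bar>)"
  define q where "q = p + (h * c a) *\<^sub>R dir a"
  have a: "dir a \<in> Basis"
    using insert.prems(1) by simp
  have K: "\<bar>dirD (dir i) (dirD (dir j) F) y\<bar> \<le> K" if "i \<in> insert a S" "j \<in> insert a S" for i j y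
    using insert.prems(2) that .
  have "0 \<le> K" "0 \<le> A"
    using K[of a a] by (auto simp: A_def intro: order_trans[OF abs_ge_zero] sum_nonneg)
  have IH: "\<bar>F (q + h *\<^sub>R (\<Sum>i\<in>S. c i *\<^sub>R dir i)) - F q - h * (\<Sum>i\<in>S. c i * dirD (dir i) F q)\<bar>
      \<le> K * A\<^sup>2 * h\<^sup>2"
    unfolding A_def using insert.prems by (intro insert.IH) auto
  have step: "\<bar>F q - F p - (h * c a) * dirD (dir a) F p\<bar> \<le> K / 2 * (h * c a)\<^sup>2"
    unfolding q_def using K by (intro dirD_line_taylor[OF sm a]) auto
  have "\<bar>\<Sum>i\<in>S. c i * (dirD (dir i) F q - dirD (dir i) F p)\<bar> \<le> A * (K * \<bar>h * c a\<bar>)"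
    unfolding q_def A_def using insert.prems K by (intro dirD_sum_shift_bound[OF sm _ a]) auto
  then have drift: "\<bar>h * (\<Sum>i\<in>S. c i * (dirD (dir i) F q - dirD (dir i) F p))\<bar> \<le> \<bar>h\<bar> * (A * (K * \<bar>h * c a\<bar>))"
    by (simp add: abs_mult mult_left_mono)
  have "F (p + h *\<^sub>R (\<Sum>i\<in>insert a S. c i *\<^sub>R dir i)) - F p - h * (\<Sum>i\<in>insert a S. c i * dirD (dir i) F p)
      = (F (q + h *\<^sub>R (\<Sum>i\<in>S. c i *\<^sub>R dir i)) - F q - h * (\<Sum>i\<in>S. c i * dirD (dir i) F q))
        + (F q - F p - (h * c a) * dirD (dir a) F p)
        + h * (\<Sum>i\<in>S. c i * (dirD (dir i) F q - dirD (dir i) F p))"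
    using insert.hyps unfolding q_def by (simp add: sum_subtractf algebra_simps)
  also have "\<bar>\<dots>\<bar> \<le> K * A\<^sup>2 * h\<^sup>2 + K / 2 * (h * c a)\<^sup>2 + \<bar>h\<bar> * (A * (K * \<bar>h * c a\<bar>))"
    using IH step drift abs_triangle_ineq by (smt (verit))
  also have "\<dots> \<le> K * (\<bar>c a\<bar> + A)\<^sup>2 * h\<^sup>2"
  proof -
    have "K * A\<^sup>2 * h\<^sup>2 + K / 2 * (h * c a)\<^sup>2 + \<bar>h\<bar> * (A * (K * \<bar>h * c a\<bar>))
        = K * h\<^sup>2 * (A\<^sup>2 + (c a)\<^sup>2 / 2 + A * \<bar>c a\<bar>)"
      by (simp add: abs_mult power2_eq_square algebra_simps)
    also have "\<dots> \<le> K * h\<^sup>2 * (\<bar>c a\<bar> + A)\<^sup>2"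
      using \<open>0 \<le> K\<close> \<open>0 \<le> A\<close> by (intro mult_left_mono) (auto simp: power2_eq_square algebra_simps)
    finally show ?thesis
      by (simp add: algebra_simps)
  qed
  also have "\<dots> = K * (\<Sum>i\<in>insert a S. \<bar>c i\<bar>)\<^sup>2 * h\<^sup>2"
    using insert.hyps by (simp add: A_def)
  finally show ?case .
qed

section \<open>Smooth families of order h^n\<close>

definition smoothO :: "nat \<Rightarrow> (real \<Rightarrow> 'a::euclidean_space \<Rightarrow> real) \<Rightarrow> bool" where
  "smoothO n R \<longleftrightarrow> (\<forall>h>0. smooth_fun (R h)) \<and> bigO n R"

lemma ex_bound_near_0_iff_eventually:
  "(\<exists>h0. 0 < h0 \<and> (\<forall>h y. 0 < h \<and> h \<le> h0 \<longrightarrow> P h y)) \<longleftrightarrow>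
    (\<forall>\<^sub>F h in at_right (0::real). \<forall>y. P h y)"
proof
  assume "\<exists>h0. 0 < h0 \<and> (\<forall>h y. 0 < h \<and> h \<le> h0 \<longrightarrow> P h y)"
  then obtain h0 :: real where "0 < h0" "\<And>h y. 0 < h \<Longrightarrow> h \<le> h0 \<Longrightarrow> P h y"
    by blast
  then show "\<forall>\<^sub>F h in at_right 0. \<forall>y. P h y"
    unfolding eventually_at_right_field by (intro exI[of _ h0]) auto
next
  assume "\<forall>\<^sub>F h in at_right 0. \<forall>y. P h y"
  then obtain b :: real where "0 < b" "\<And>h y. 0 < h \<Longrightarrow> h < b \<Longrightarrow> P h y"
    unfolding eventually_at_right_field by blast
  then show "\<exists>h0. 0 < h0 \<and> (\<forall>h y. 0 < h \<and> h \<le> h0 \<longrightarrow> P h y)"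
    by (intro exI[of _ "b / 2"]) auto
qed

lemma bigO_iff_eventually:
  "bigO n R \<longleftrightarrow>
    (\<forall>bs. set bs \<subseteq> Basis \<longrightarrow> (\<exists>C. \<forall>\<^sub>F h in at_right 0. \<forall>y. \<bar>iterD bs (R h) y\<bar> \<le> C * h ^ n))"
  unfolding bigO_def ex_bound_near_0_iff_eventually ..

lemma smoothO_intro:
  assumes "\<And>h. 0 < h \<Longrightarrow> smooth_fun (R h)"
    and "\<And>bs. set bs \<subseteq> Basis \<Longrightarrow> \<exists>C. \<forall>\<^sub>F h in at_right 0. \<forall>y. \<bar>iterD bs (R h) y\<bar> \<le> C * h ^ n"
  shows "smoothO n R"
  using assms unfolding smoothO_def bigO_iff_eventually by blast

lemma smoothO_smooth_fun: "smoothO n R \<Longrightarrow> 0 < h \<Longrightarrow> smooth_fun (R h)"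
  unfolding smoothO_def by blast

lemma smoothO_bigO: "smoothO n R \<Longrightarrow> bigO n R"
  unfolding smoothO_def by blast

lemma smoothO_boundE:
  assumes "smoothO n R" "set bs \<subseteq> Basis"
  obtains C where "\<forall>\<^sub>F h in at_right 0. 0 < h \<and> smooth_fun (R h) \<and> (\<forall>y. \<bar>iterD bs (R h) y\<bar> \<le> C * h ^ n)"
proof -
  obtain C where "\<forall>\<^sub>F h in at_right 0. \<forall>y. \<bar>iterD bs (R h) y\<bar> \<le> C * h ^ n"
    using assms unfolding smoothO_def bigO_iff_eventually by blast
  with eventually_at_right_less[of 0] have "\<forall>\<^sub>F h in at_right 0. 0 < h \<and> smooth_fun (R h) \<and>
      (\<forall>y. \<bar>iterD bs (R h) y\<bar> \<le> C * h ^ n)"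
    by eventually_elim (use assms(1) smoothO_smooth_fun in blast)
  then show thesis ..
qed

lemma smoothO_cong:
  assumes "\<And>h p. 0 < h \<Longrightarrow> R h p = S h p" "smoothO n S"
  shows "smoothO n R"
proof (rule smoothO_intro)
  have eq: "R h = S h" if "0 < h" for h
    using assms(1)[OF that] by blast
  show "smooth_fun (R h)" if "0 < h" for h
    using smoothO_smooth_fun[OF assms(2) that] eq[OF that] by simp
  fix bs :: "'a list"
  assume "set bs \<subseteq> Basis"
  then obtain C where "\<forall>\<^sub>F h in at_right 0. 0 < h \<and> smooth_fun (S h) \<and> (\<forall>y. \<bar>iterD bs (S h) y\<bar> \<le> C * h ^ n)"
    using smoothO_boundE[OF assms(2)] by blast
  then have "\<forall>\<^sub>F h in at_right 0. \<forall>y. \<bar>iterD bs (R h) y\<bar> \<le> C * h ^ n"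
    by eventually_elim (simp add: eq)
  then show "\<exists>C. \<forall>\<^sub>F h in at_right 0. \<forall>y. \<bar>iterD bs (R h) y\<bar> \<le> C * h ^ n" ..
qed

lemma smoothO_zero: "smoothO n (\<lambda>h p. 0)"
  by (rule smoothO_intro) (auto simp: smooth_fun_zero iterD_zero intro!: exI[of _ 0])

lemma smoothO_add:
  assumes "smoothO n R" "smoothO n S"
  shows "smoothO n (\<lambda>h p. R h p + S h p)"
proof (rule smoothO_intro)
  show "smooth_fun (\<lambda>p. R h p + S h p)" if "0 < h" for h
    using assms that by (intro smooth_fun_add smoothO_smooth_fun)
  fix bs :: "'a list"
  assume bs: "set bs \<subseteq> Basis"
  obtain C1 where 1: "\<forall>\<^sub>F h in at_right 0. 0 < h \<and> smooth_fun (R h) \<and> (\<forall>y. \<bar>iterD bs (R h) y\<bar> \<le> C1 * h ^ n)"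
    using smoothO_boundE[OF assms(1) bs] .
  obtain C2 where 2: "\<forall>\<^sub>F h in at_right 0. 0 < h \<and> smooth_fun (S h) \<and> (\<forall>y. \<bar>iterD bs (S h) y\<bar> \<le> C2 * h ^ n)"
    using smoothO_boundE[OF assms(2) bs] .
  from 1 2 have "\<forall>\<^sub>F h in at_right 0. \<forall>y. \<bar>iterD bs (\<lambda>p. R h p + S h p) y\<bar> \<le> (C1 + C2) * h ^ n"
  proof eventually_elim
    case (elim h)
    show ?case
    proof
      fix y
      have "\<bar>iterD bs (R h) y + iterD bs (S h) y\<bar> \<le> C1 * h ^ n + C2 * h ^ n"
        using elim by (meson abs_triangle_ineq add_mono order_trans)
      then show "\<bar>iterD bs (\<lambda>p. R h p + S h p) y\<bar> \<le> (C1 + C2) * h ^ n"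
        using elim by (simp add: iterD_add bs distrib_right)
    qed
  qed
  then show "\<exists>C. \<forall>\<^sub>F h in at_right 0. \<forall>y. \<bar>iterD bs (\<lambda>p. R h p + S h p) y\<bar> \<le> C * h ^ n" ..
qed

lemma smoothO_cmult:
  assumes "smoothO n R"
  shows "smoothO n (\<lambda>h p. c * R h p)"
proof (rule smoothO_intro)
  show "smooth_fun (\<lambda>p. c * R h p)" if "0 < h" for h
    using assms that by (intro smooth_fun_cmult smoothO_smooth_fun)
  fix bs :: "'a list"
  assume bs: "set bs \<subseteq> Basis"
  obtain C where "\<forall>\<^sub>F h in at_right 0. 0 < h \<and> smooth_fun (R h) \<and> (\<forall>y. \<bar>iterD bs (R h) y\<bar> \<le> C * h ^ n)"
    using smoothO_boundE[OF assms bs] .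
  then have "\<forall>\<^sub>F h in at_right 0. \<forall>y. \<bar>iterD bs (\<lambda>p. c * R h p) y\<bar> \<le> (\<bar>c\<bar> * C) * h ^ n"
    by eventually_elim (simp add: iterD_cmult bs abs_mult mult_left_mono mult.assoc)
  then show "\<exists>C. \<forall>\<^sub>F h in at_right 0. \<forall>y. \<bar>iterD bs (\<lambda>p. c * R h p) y\<bar> \<le> C * h ^ n" ..
qed

lemma smoothO_sum:
  assumes "finite I" "\<And>i. i \<in> I \<Longrightarrow> smoothO n (F i)"
  shows "smoothO n (\<lambda>h p. \<Sum>i\<in>I. F i h p)"
  using assms by (induction I rule: finite_induct) (auto intro: smoothO_add smoothO_zero)

lemma smoothO_hmult:
  assumes "smoothO n R"
  shows "smoothO (n + 1) (\<lambda>h p. h * R h p)"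
proof (rule smoothO_intro)
  show "smooth_fun (\<lambda>p. h * R h p)" if "0 < h" for h
    using assms that by (intro smooth_fun_cmult smoothO_smooth_fun)
  fix bs :: "'a list"
  assume bs: "set bs \<subseteq> Basis"
  obtain C where "\<forall>\<^sub>F h in at_right 0. 0 < h \<and> smooth_fun (R h) \<and> (\<forall>y. \<bar>iterD bs (R h) y\<bar> \<le> C * h ^ n)"
    using smoothO_boundE[OF assms bs] .
  then have "\<forall>\<^sub>F h in at_right 0. \<forall>y. \<bar>iterD bs (\<lambda>p. h * R h p) y\<bar> \<le> C * h ^ (n + 1)"
    by eventually_elim (simp add: iterD_cmult bs abs_mult mult_left_mono algebra_simps)
  then show "\<exists>C. \<forall>\<^sub>F h in at_right 0. \<forall>y. \<bar>iterD bs (\<lambda>p. h * R h p) y\<bar> \<le> C * h ^ (n + 1)" ..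
qed

lemma smoothO_mono:
  assumes "m \<le> n" "smoothO n R"
  shows "smoothO m R"
proof (rule smoothO_intro)
  show "smooth_fun (R h)" if "0 < h" for h
    using assms(2) that by (rule smoothO_smooth_fun)
  fix bs :: "'a list"
  assume bs: "set bs \<subseteq> Basis"
  obtain C where "\<forall>\<^sub>F h in at_right 0. 0 < h \<and> smooth_fun (R h) \<and> (\<forall>y. \<bar>iterD bs (R h) y\<bar> \<le> C * h ^ n)"
    using smoothO_boundE[OF assms(2) bs] .
  moreover have "\<forall>\<^sub>F h in at_right 0. h < (1::real)"
    by (rule eventually_at_rightI[of 0 1]) auto
  ultimately have "\<forall>\<^sub>F h in at_right 0. \<forall>y. \<bar>iterD bs (R h) y\<bar> \<le> \<bar>C\<bar> * h ^ m"
  proof eventually_elim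
    case (elim h)
    have "C * h ^ n \<le> \<bar>C\<bar> * h ^ n"
      using elim by (simp add: mult_right_mono)
    also have "\<dots> \<le> \<bar>C\<bar> * h ^ m"
      using elim assms(1) by (intro mult_left_mono power_decreasing) auto
    finally show ?case
      using elim by (meson order_trans)
  qed
  then show "\<exists>C. \<forall>\<^sub>F h in at_right 0. \<forall>y. \<bar>iterD bs (R h) y\<bar> \<le> C * h ^ m" ..
qed

lemma smoothO_dirD:
  assumes "smoothO n R" "b \<in> Basis"
  shows "smoothO n (\<lambda>h. dirD b (R h))"
proof (rule smoothO_intro)
  show "smooth_fun (dirD b (R h))" if "0 < h" for h
    using assms that by (intro smooth_fun_dirD smoothO_smooth_fun)
  fix bs :: "'a list"
  assume "set bs \<subseteq> Basis"
  then have "set (bs @ [b]) \<subseteq> Basis"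
    using assms(2) by simp
  then obtain C where "\<forall>\<^sub>F h in at_right 0. \<forall>y. \<bar>iterD (bs @ [b]) (R h) y\<bar> \<le> C * h ^ n"
    using assms(1) unfolding smoothO_def bigO_iff_eventually by blast
  then show "\<exists>C. \<forall>\<^sub>F h in at_right 0. \<forall>y. \<bar>iterD bs (dirD b (R h)) y\<bar> \<le> C * h ^ n"
    by (auto simp: iterD_append)
qed

lemma eventually_uniform_bound_finite:
  fixes Q :: "'i \<Rightarrow> 'b \<Rightarrow> 'c \<Rightarrow> real"
  assumes "finite I" "\<And>i. i \<in> I \<Longrightarrow> \<exists>C. \<forall>\<^sub>F x in F. \<forall>y. \<bar>Q i x y\<bar> \<le> C"
  shows "\<exists>C. \<forall>\<^sub>F x in F. \<forall>i\<in>I. \<forall>y. \<bar>Q i x y\<bar> \<le> C"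
  using assms
proof (induction I rule: finite_induct)
  case empty
  then show ?case by simp
next
  case (insert a S)
  obtain C1 where 1: "\<forall>\<^sub>F x in F. \<forall>i\<in>S. \<forall>y. \<bar>Q i x y\<bar> \<le> C1"
    using insert by blast
  obtain C2 where 2: "\<forall>\<^sub>F x in F. \<forall>y. \<bar>Q a x y\<bar> \<le> C2"
    using insert.prems by blast
  from 1 2 have "\<forall>\<^sub>F x in F. \<forall>i\<in>insert a S. \<forall>y. \<bar>Q i x y\<bar> \<le> max C1 C2"
    by eventually_elim (auto intro: le_max_iff_disj[THEN iffD2])
  then show ?case ..
qed

lemma smoothO_second_partials_uniform_bound:
  assumes g: "smoothO 0 g" and fin: "finite I" and dir: "dir ` I \<subseteq> Basis" and bs: "set bs \<subseteq> Basis"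
  obtains K where "\<forall>\<^sub>F h in at_right 0. \<forall>i\<in>I. \<forall>j\<in>I. \<forall>y.
    \<bar>dirD (dir i) (dirD (dir j) (iterD bs (g h))) y\<bar> \<le> K"
proof -
  have "\<exists>C. \<forall>\<^sub>F h in at_right 0. \<forall>y. \<bar>iterD (dir (fst ij) # dir (snd ij) # bs) (g h) y\<bar> \<le> C"
    if "ij \<in> I \<times> I" for ij
  proof -
    have "set (dir (fst ij) # dir (snd ij) # bs) \<subseteq> Basis"
      using that dir bs by auto
    then obtain C where "\<forall>\<^sub>F h in at_right 0. 0 < h \<and> smooth_fun (g h) \<and>
        (\<forall>y. \<bar>iterD (dir (fst ij) # dir (snd ij) # bs) (g h) y\<bar> \<le> C * h ^ 0)"
      by (rule smoothO_boundE[OF g])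
    then have "\<forall>\<^sub>F h in at_right 0. \<forall>y. \<bar>iterD (dir (fst ij) # dir (snd ij) # bs) (g h) y\<bar> \<le> C"
      by (rule eventually_mono) simp
    then show ?thesis ..
  qed
  then have "\<exists>K. \<forall>\<^sub>F h in at_right 0. \<forall>ij\<in>I \<times> I. \<forall>y.
      \<bar>iterD (dir (fst ij) # dir (snd ij) # bs) (g h) y\<bar> \<le> K"
    by (rule eventually_uniform_bound_finite[OF finite_cartesian_product[OF fin fin]])
  then obtain K where "\<forall>\<^sub>F h in at_right 0. \<forall>ij\<in>I \<times> I. \<forall>y.
      \<bar>iterD (dir (fst ij) # dir (snd ij) # bs) (g h) y\<bar> \<le> K" ..
  then have "\<forall>\<^sub>F h in at_right 0. \<forall>i\<in>I. \<forall>j\<in>I. \<forall>y. \<bar>dirD (dir i) (dirD (dir j) (iterD bs (g h))) y\<bar> \<le> K"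
    by (rule eventually_mono) auto
  then show thesis ..
qed

lemma smooth_fun_taylor_remainder:
  fixes g :: "'a::euclidean_space \<Rightarrow> real"
  assumes sm: "smooth_fun g" and fin: "finite I" and dir: "dir ` I \<subseteq> Basis"
  shows "\<And>i. i \<in> I \<Longrightarrow> smooth_fun (\<lambda>p. c i * dirD (dir i) g p)"
    and "smooth_fun (\<lambda>p. \<Sum>i\<in>I. c i * dirD (dir i) g p)"
    and "smooth_fun (\<lambda>p. g (p + w) - g p)"
    and "smooth_fun (\<lambda>p. g (p + w) - g p - h * (\<Sum>i\<in>I. c i * dirD (dir i) g p))"
proof -
  show summand: "smooth_fun (\<lambda>p. c i * dirD (dir i) g p)" if "i \<in> I" for i
    using dir that by (intro smooth_fun_cmult smooth_fun_dirD[OF sm]) auto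
  show sum: "smooth_fun (\<lambda>p. \<Sum>i\<in>I. c i * dirD (dir i) g p)"
    using fin summand by (rule smooth_fun_sum)
  show diff: "smooth_fun (\<lambda>p. g (p + w) - g p)"
    by (rule smooth_fun_diff[OF smooth_fun_shift[OF sm] sm])
  show "smooth_fun (\<lambda>p. g (p + w) - g p - h * (\<Sum>i\<in>I. c i * dirD (dir i) g p))"
    by (rule smooth_fun_diff[OF diff smooth_fun_cmult[OF sum]])
qed

lemma iterD_taylor_remainder:
  fixes g :: "'a::euclidean_space \<Rightarrow> real"
  assumes sm: "smooth_fun g" and fin: "finite I" and dir: "dir ` I \<subseteq> Basis" and bs: "set bs \<subseteq> Basis"
  shows "iterD bs (\<lambda>p. g (p + w) - g p - h * (\<Sum>i\<in>I. c i * dirD (dir i) g p))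
       = (\<lambda>p. iterD bs g (p + w) - iterD bs g p - h * (\<Sum>i\<in>I. c i * dirD (dir i) (iterD bs g) p))"
proof -
  note sm_parts = smooth_fun_taylor_remainder[OF sm fin dir]
  have summand: "iterD bs (\<lambda>p. c i * dirD (dir i) g p) = (\<lambda>p. c i * dirD (dir i) (iterD bs g) p)"
    if "i \<in> I" for i
  proof -
    have "dir i \<in> Basis"
      using dir that by auto
    then show ?thesis
      by (simp add: iterD_cmult[OF smooth_fun_dirD[OF sm] bs] iterD_dirD_commute[OF sm _ bs])
  qed
  have "iterD bs (\<lambda>p. \<Sum>i\<in>I. c i * dirD (dir i) g p) = (\<lambda>p. \<Sum>i\<in>I. iterD bs (\<lambda>p. c i * dirD (dir i) g p) p)"
    by (rule iterD_sum[OF fin _ bs]) (rule sm_parts(1))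
  also have "\<dots> = (\<lambda>p. \<Sum>i\<in>I. c i * dirD (dir i) (iterD bs g) p)"
    using summand by (intro ext sum.cong) auto
  finally have "iterD bs (\<lambda>p. \<Sum>i\<in>I. c i * dirD (dir i) g p) = (\<lambda>p. \<Sum>i\<in>I. c i * dirD (dir i) (iterD bs g) p)" .
  moreover have "iterD bs (\<lambda>p. g (p + w) - g p) = (\<lambda>p. iterD bs g (p + w) - iterD bs g p)"
    by (simp add: iterD_diff[OF smooth_fun_shift[OF sm] sm bs] iterD_shift)
  ultimately show ?thesis
    by (simp add: iterD_diff[OF sm_parts(3) smooth_fun_cmult[OF sm_parts(2)] bs] iterD_cmult[OF sm_parts(2) bs])
qed

lemma smoothO_taylor:
  fixes g :: "real \<Rightarrow> 'a::euclidean_space \<Rightarrow> real"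
  assumes g: "smoothO 0 g" and fin: "finite I" and dir: "dir ` I \<subseteq> Basis"
  shows "smoothO 2 (\<lambda>h p. g h (p + h *\<^sub>R (\<Sum>i\<in>I. c i *\<^sub>R dir i)) - g h p
                  - h * (\<Sum>i\<in>I. c i * dirD (dir i) (g h) p))"
proof (rule smoothO_intro)
  fix h :: real
  assume "0 < h"
  with g have "smooth_fun (g h)"
    by (rule smoothO_smooth_fun)
  then show "smooth_fun (\<lambda>p. g h (p + h *\<^sub>R (\<Sum>i\<in>I. c i *\<^sub>R dir i)) - g h p
                  - h * (\<Sum>i\<in>I. c i * dirD (dir i) (g h) p))"
    using fin dir by (rule smooth_fun_taylor_remainder(4))
next
  fix bs :: "'a list"
  assume bs: "set bs \<subseteq> Basis"
  obtain K where K: "\<forall>\<^sub>F h in at_right 0. \<forall>i\<in>I. \<forall>j\<in>I. \<forall>y.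
      \<bar>dirD (dir i) (dirD (dir j) (iterD bs (g h))) y\<bar> \<le> K"
    using smoothO_second_partials_uniform_bound[OF g fin dir bs] .
  from K eventually_at_right_less[of 0]
  have "\<forall>\<^sub>F h in at_right 0. \<forall>y. \<bar>iterD bs (\<lambda>p. g h (p + h *\<^sub>R (\<Sum>i\<in>I. c i *\<^sub>R dir i)) - g h p
                  - h * (\<Sum>i\<in>I. c i * dirD (dir i) (g h) p)) y\<bar> \<le> (K * (\<Sum>i\<in>I. \<bar>c i\<bar>)\<^sup>2) * h\<^sup>2"
  proof eventually_elim
    case (elim h)
    have sm: "smooth_fun (g h)"
      using g elim(2) by (rule smoothO_smooth_fun)
    from elim(1) show ?case
      unfolding iterD_taylor_remainder[OF sm fin dir bs]
      using taylor_estimate_dirD_sum[OF smooth_fun_iterD[OF sm bs] fin dir] by blast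
  qed
  then show "\<exists>C. \<forall>\<^sub>F h in at_right 0. \<forall>y. \<bar>iterD bs (\<lambda>p. g h (p + h *\<^sub>R (\<Sum>i\<in>I. c i *\<^sub>R dir i)) - g h p
                  - h * (\<Sum>i\<in>I. c i * dirD (dir i) (g h) p)) y\<bar> \<le> C * h ^ 2"
    ..
qed

section \<open>Transport derivatives in space-time\<close>

definition transport_deriv :: "real^'d::finite \<Rightarrow> ((real^'d) \<times> real \<Rightarrow> real) \<Rightarrow> (real^'d) \<times> real \<Rightarrow> real" where
  "transport_deriv u F p = pt F p + (\<Sum>\<beta>\<in>UNIV. u $ \<beta> * px \<beta> F p)"

lemma time_in_Basis: "((0::real^'d::finite), (1::real)) \<in> Basis"
  by (simp add: Basis_prod_def)

lemma space_in_Basis: "((axis (\<beta>::'d::finite) (1::real)), (0::real)) \<in> Basis"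
  by (auto simp: Basis_prod_def Basis_vec_def)

lemma sum_UNIV_option:
  fixes g :: "'d::finite option \<Rightarrow> 'b::comm_monoid_add"
  shows "(\<Sum>i\<in>UNIV. g i) = g None + (\<Sum>\<beta>\<in>UNIV. g (Some \<beta>))"
  by (simp add: UNIV_option_conv sum.reindex)

lemma transport_vector_expansion:
  fixes u :: "real^'d::finite"
  shows "(\<Sum>i\<in>UNIV. case_option 1 (($) u) i *\<^sub>R case_option (0, 1) (\<lambda>\<beta>. (axis \<beta> 1, 0)) i) = (u, 1)"
  using basis_expansion[of u, unfolded scalar_mult_eq_scaleR]
  by (simp add: sum_UNIV_option prod_eq_iff fst_sum snd_sum)

lemma transport_deriv_eq_sum_dirD:
  "(\<Sum>i\<in>UNIV. case_option 1 (($) u) i * dirD (case_option (0, 1) (\<lambda>\<beta>. (axis \<beta> 1, 0)) i) F p)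
    = transport_deriv u F p"
  by (simp add: sum_UNIV_option transport_deriv_def pt_def px_def)

lemma smoothO_taylor_transport:
  fixes g :: "real \<Rightarrow> (real^'d::finite) \<times> real \<Rightarrow> real"
  assumes "smoothO 0 g"
  shows "smoothO 2 (\<lambda>h p. g h (p + h *\<^sub>R (u, 1)) - g h p - h * transport_deriv u (g h) p)"
  using smoothO_taylor[OF assms finite_class.finite_UNIV, of "case_option (0, 1) (\<lambda>\<beta>. (axis \<beta> 1, 0))" "case_option 1 (($) u)"]
  by (simp add: transport_vector_expansion transport_deriv_eq_sum_dirD image_subset_iff time_in_Basis
      space_in_Basis split: option.split)

lemma smoothO_transport_deriv:
  fixes F :: "real \<Rightarrow> (real^'d::finite) \<times> real \<Rightarrow> real"
  assumes "smoothO n F"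
  shows "smoothO n (\<lambda>h. transport_deriv u (F h))"
proof -
  have "smoothO n (\<lambda>h p. dirD (0, 1) (F h) p + (\<Sum>\<beta>\<in>UNIV. u $ \<beta> * dirD (axis \<beta> 1, 0) (F h) p))"
    by (intro smoothO_add smoothO_dirD assms time_in_Basis smoothO_sum smoothO_cmult space_in_Basis finite_class.finite_UNIV)
  then show ?thesis
    unfolding transport_deriv_def[abs_def] pt_def px_def .
qed

lemma transport_deriv_diff:
  fixes F G :: "(real^'d::finite) \<times> real \<Rightarrow> real"
  assumes "smooth_fun F" "smooth_fun G"
  shows "transport_deriv u (\<lambda>p. F p - G p) p = transport_deriv u F p - transport_deriv u G p"
  unfolding transport_deriv_def pt_def px_def
  by (simp add: dirD_diff[OF assms time_in_Basis] dirD_diff[OF assms space_in_Basis]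
      sum_subtractf right_diff_distrib)

section \<open>The lattice Boltzmann scheme\<close>

lemma sum_matrix_inverse_apply:
  fixes A B :: "nat \<Rightarrow> nat \<Rightarrow> real"
  assumes "\<forall>i\<le>J. \<forall>l\<le>J. (\<Sum>k\<le>J. A i k * B k l) = (if i = l then 1 else 0)" "i \<le> J"
  shows "(\<Sum>k\<le>J. A i k * (\<Sum>l\<le>J. B k l * x l)) = x i"
proof -
  have "(\<Sum>k\<le>J. A i k * (\<Sum>l\<le>J. B k l * x l)) = (\<Sum>k\<le>J. \<Sum>l\<le>J. A i k * B k l * x l)"
    by (simp add: sum_distrib_left mult.assoc)
  also have "\<dots> = (\<Sum>l\<le>J. \<Sum>k\<le>J. A i k * B k l * x l)"
    by (rule sum.swap)
  also have "\<dots> = (\<Sum>l\<le>J. (\<Sum>k\<le>J. A i k * B k l) * x l)"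
    by (simp add: sum_distrib_right)
  also have "\<dots> = (\<Sum>l\<le>J. if l = i then x l else 0)"
    using assms by (intro sum.cong) auto
  also have "\<dots> = x i"
    using assms(2) by simp
  finally show ?thesis .
qed

lemma meq_eq_mom_if_conserved:
  fixes \<iota> :: "nat \<Rightarrow> 'd::finite" and v :: "nat \<Rightarrow> real^'d"
  assumes iota: "bij_betw \<iota> {1..CARD('d)} UNIV"
    and M0: "\<forall>j\<le>J. M 0 j = 1"
    and Malpha: "\<forall>\<alpha>\<in>{1..CARD('d)}. \<forall>j\<le>J. M \<alpha> j = v j $ \<iota> \<alpha>"
    and G_mass: "\<forall>\<rho> q. (\<Sum>j\<le>J. G j (\<rho>, q)) = \<rho>"
    and G_mom: "\<forall>\<rho> q. \<forall>\<alpha>\<in>{1..CARD('d)}. (\<Sum>j\<le>J. v j $ \<iota> \<alpha> * G j (\<rho>, q)) = q $ \<iota> \<alpha>"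
    and k: "k \<le> CARD('d)"
  shows "meq J M G \<iota> f h k p = mom J M f h k p"
proof (cases "k = 0")
  case True
  then show ?thesis
    using M0 G_mass unfolding meq_def feq_def Wvar_def by simp
next
  case False
  then have k: "k \<in> {1..CARD('d)}"
    using k by auto
  have "meq J M G \<iota> f h k p = (\<Sum>j\<le>J. v j $ \<iota> k * G j (Wvar J M \<iota> f h p))"
    unfolding meq_def feq_def using Malpha k by simp
  also have "\<dots> = mom J M f h (the_inv_into {1..CARD('d)} \<iota> (\<iota> k)) p"
    unfolding Wvar_def using G_mom k by simp
  also have "\<dots> = mom J M f h k p"
    using the_inv_into_f_f[OF bij_betw_imp_inj_on[OF iota] k] by simp
  finally show ?thesis .
qed

locale lbm_scheme =
  fixes J :: nat and M Minv :: "nat \<Rightarrow> nat \<Rightarrow> real"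
    and G :: "nat \<Rightarrow> real \<times> (real^'d::finite) \<Rightarrow> real"
    and s :: "nat \<Rightarrow> real" and \<iota> :: "nat \<Rightarrow> 'd" and v :: "nat \<Rightarrow> real^'d"
    and f :: "real \<Rightarrow> nat \<Rightarrow> (real^'d) \<times> real \<Rightarrow> real"
  assumes Minv_left: "\<forall>i\<le>J. \<forall>l\<le>J. (\<Sum>k\<le>J. Minv i k * M k l) = (if i = l then 1 else 0)"
    and Minv_right: "\<forall>i\<le>J. \<forall>l\<le>J. (\<Sum>k\<le>J. M i k * Minv k l) = (if i = l then 1 else 0)"
    and meq_conserved: "\<And>h k p. k \<le> CARD('d) \<Longrightarrow> meq J M G \<iota> f h k p = mom J M f h k p"
    and s_pos: "\<And>k. CARD('d) < k \<Longrightarrow> k \<le> J \<Longrightarrow> 0 < s k"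
    and smoothO_f: "\<And>j. j \<le> J \<Longrightarrow> smoothO 0 (\<lambda>h. f h j)"
    and advection: "\<And>h j x t. 0 < h \<Longrightarrow> j \<le> J \<Longrightarrow>
      f h j (x, t + h) = fstar J M Minv G s \<iota> f h j (x - h *\<^sub>R v j, t)"
begin

abbreviation "m \<equiv> mom J M f"
abbreviation "m_eq \<equiv> meq J M G \<iota> f"
abbreviation "m_star \<equiv> mstar J M G s \<iota> f"
abbreviation "f_eq \<equiv> feq J M G \<iota> f"
abbreviation "f_star \<equiv> fstar J M Minv G s \<iota> f"
abbreviation "\<theta> \<equiv> theta J M G v \<iota> f"

lemma f_star_eq_shift:
  assumes "0 < h" "j \<le> J"
  shows "f_star h j p = f h j (p + h *\<^sub>R (v j, 1))"
proof (cases p)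
  case (Pair x t)
  then show ?thesis
    using advection[OF assms, of "x + h *\<^sub>R v j" t] by simp
qed

lemma m_star_from_f_star: "k \<le> J \<Longrightarrow> m_star h k p = (\<Sum>j\<le>J. M k j * f_star h j p)"
  unfolding fstar_def using sum_matrix_inverse_apply[OF Minv_right] by simp

lemma f_from_moments: "j \<le> J \<Longrightarrow> f h j p = (\<Sum>k\<le>J. Minv j k * m h k p)"
  unfolding mom_def using sum_matrix_inverse_apply[OF Minv_left] by simp

lemma f_eq_from_moments: "j \<le> J \<Longrightarrow> f_eq h j p = (\<Sum>k\<le>J. Minv j k * m_eq h k p)"
  unfolding meq_def using sum_matrix_inverse_apply[OF Minv_left] by simp

lemma m_star_conserved: "k \<le> CARD('d) \<Longrightarrow> m_star h k p = m h k p"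
  unfolding mstar_def by simp

lemma m_star_relaxed: "CARD('d) < k \<Longrightarrow> m_star h k p = (1 - s k) * m h k p + s k * m_eq h k p"
  unfolding mstar_def by simp

lemma theta_eq_sum_transport_deriv: "\<theta> h k p = (\<Sum>j\<le>J. M k j * transport_deriv (v j) (f_eq h j) p)"
  unfolding theta_def transport_deriv_def ..

lemma smoothO_m_star_minus_m_taylor:
  assumes "k \<le> J"
  shows "smoothO 2 (\<lambda>h p. m_star h k p - m h k p - h * (\<Sum>j\<le>J. M k j * transport_deriv (v j) (f h j) p))"
proof (rule smoothO_cong)
  fix h :: real and p
  assume "0 < h"
  then show "m_star h k p - m h k p - h * (\<Sum>j\<le>J. M k j * transport_deriv (v j) (f h j) p)
      = (\<Sum>j\<le>J. M k j * (f h j (p + h *\<^sub>R (v j, 1)) - f h j p - h * transport_deriv (v j) (f h j) p))"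
    by (simp add: m_star_from_f_star[OF assms] f_star_eq_shift mom_def sum_subtractf sum_distrib_left
        sum.distrib algebra_simps)
next
  show "smoothO 2 (\<lambda>h p. \<Sum>j\<le>J. M k j * (f h j (p + h *\<^sub>R (v j, 1)) - f h j p - h * transport_deriv (v j) (f h j) p))"
    by (intro smoothO_sum smoothO_cmult smoothO_taylor_transport smoothO_f) auto
qed

lemma smoothO_m_star_minus_m:
  assumes "k \<le> J"
  shows "smoothO 1 (\<lambda>h p. m_star h k p - m h k p)"
proof -
  have "smoothO 0 (\<lambda>h p. \<Sum>j\<le>J. M k j * transport_deriv (v j) (f h j) p)"
    by (intro smoothO_sum smoothO_cmult smoothO_transport_deriv smoothO_f) auto
  from smoothO_hmult[OF this]
  have "smoothO 1 (\<lambda>h p. h * (\<Sum>j\<le>J. M k j * transport_deriv (v j) (f h j) p))"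
    by simp
  moreover have "smoothO 1 (\<lambda>h p. m_star h k p - m h k p - h * (\<Sum>j\<le>J. M k j * transport_deriv (v j) (f h j) p))"
    by (rule smoothO_mono[OF _ smoothO_m_star_minus_m_taylor[OF assms]]) simp
  ultimately show ?thesis
    using smoothO_add by force
qed

lemma smoothO_m_eq_minus_m:
  assumes "k \<le> J"
  shows "smoothO 1 (\<lambda>h p. m_eq h k p - m h k p)"
proof (cases "k \<le> CARD('d)")
  case True
  then show ?thesis
    by (intro smoothO_cong[OF _ smoothO_zero]) (simp add: meq_conserved)
next
  case False
  then have "0 < s k"
    using assms s_pos by simp
  then have "m_eq h k p - m h k p = 1 / s k * (m_star h k p - m h k p)" for h p
    using False by (simp add: m_star_relaxed field_simps)
  then show ?thesis
    by (intro smoothO_cong[OF _ smoothO_cmult[OF smoothO_m_star_minus_m[OF assms], of "1 / s k"]])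
qed

lemma smoothO_f_eq_minus_f:
  assumes "j \<le> J"
  shows "smoothO 1 (\<lambda>h p. f_eq h j p - f h j p)"
proof (rule smoothO_cong)
  show "f_eq h j p - f h j p = (\<Sum>k\<le>J. Minv j k * (m_eq h k p - m h k p))" for h p
    using assms by (simp add: f_eq_from_moments f_from_moments[of j h p] sum_subtractf right_diff_distrib)
  show "smoothO 1 (\<lambda>h p. \<Sum>k\<le>J. Minv j k * (m_eq h k p - m h k p))"
    by (intro smoothO_sum smoothO_cmult smoothO_m_eq_minus_m) auto
qed

lemma smoothO_f_eq:
  assumes "j \<le> J"
  shows "smoothO 0 (\<lambda>h. f_eq h j)"
  using smoothO_add[OF smoothO_f[OF assms] smoothO_mono[OF _ smoothO_f_eq_minus_f[OF assms]]]
  by simp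

lemma smoothO_theta: "smoothO 0 (\<lambda>h. \<theta> h k)"
proof -
  have "smoothO 0 (\<lambda>h p. \<Sum>j\<le>J. M k j * transport_deriv (v j) (f_eq h j) p)"
    by (intro smoothO_sum smoothO_cmult smoothO_transport_deriv smoothO_f_eq) auto
  then show ?thesis
    unfolding theta_eq_sum_transport_deriv[abs_def] .
qed

lemma smoothO_m_star_minus_m_theta:
  assumes "k \<le> J"
  shows "smoothO 2 (\<lambda>h p. m_star h k p - m h k p - h * \<theta> h k p)"
proof (rule smoothO_cong)
  fix h :: real and p
  assume "0 < h"
  then have "M k j * transport_deriv (v j) (f h j) p - M k j * transport_deriv (v j) (f_eq h j) p
      = - M k j * transport_deriv (v j) (\<lambda>p. f_eq h j p - f h j p) p" if "j \<le> J" for j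
    using that by (simp add: transport_deriv_diff smoothO_smooth_fun[OF smoothO_f]
        smoothO_smooth_fun[OF smoothO_f_eq] algebra_simps)
  then have drift: "(\<Sum>j\<le>J. M k j * transport_deriv (v j) (f h j) p) - \<theta> h k p
      = (\<Sum>j\<le>J. - M k j * transport_deriv (v j) (\<lambda>p. f_eq h j p - f h j p) p)"
    unfolding theta_eq_sum_transport_deriv sum_subtractf[symmetric] by (intro sum.cong) simp_all
  then show "m_star h k p - m h k p - h * \<theta> h k p
      = (m_star h k p - m h k p - h * (\<Sum>j\<le>J. M k j * transport_deriv (v j) (f h j) p))
        + h * (\<Sum>j\<le>J. - M k j * transport_deriv (v j) (\<lambda>p. f_eq h j p - f h j p) p)"
    unfolding drift[symmetric] by (simp add: algebra_simps)
next
  have "smoothO 1 (\<lambda>h p. \<Sum>j\<le>J. - M k j * transport_deriv (v j) (\<lambda>p. f_eq h j p - f h j p) p)"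
    by (intro smoothO_sum smoothO_cmult smoothO_transport_deriv smoothO_f_eq_minus_f) auto
  from smoothO_hmult[OF this]
  have "smoothO 2 (\<lambda>h p. h * (\<Sum>j\<le>J. - M k j * transport_deriv (v j) (\<lambda>p. f_eq h j p - f h j p) p))"
    by (simp add: numeral_2_eq_2)
  then show "smoothO 2 (\<lambda>h p. (m_star h k p - m h k p - h * (\<Sum>j\<le>J. M k j * transport_deriv (v j) (f h j) p))
        + h * (\<Sum>j\<le>J. - M k j * transport_deriv (v j) (\<lambda>p. f_eq h j p - f h j p) p))"
    by (rule smoothO_add[OF smoothO_m_star_minus_m_taylor[OF assms]])
qed

lemma relaxation_defect_eq:
  assumes "CARD('d) < k" "k \<le> J"
  shows "m h k p - (m_eq h k p - (h / s k) * \<theta> h k p)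
      = - (1 / s k) * (m_star h k p - m h k p - h * \<theta> h k p)"
    and "m_star h k p - (m_eq h k p - (1 / s k - 1) * h * \<theta> h k p)
      = (1 - 1 / s k) * (m_star h k p - m h k p - h * \<theta> h k p)"
  using s_pos[OF assms] by (simp_all add: m_star_relaxed[OF assms(1)] field_simps)

lemma smoothO_m_expansion:
  assumes "CARD('d) < k" "k \<le> J"
  shows "smoothO 2 (\<lambda>h p. m h k p - (m_eq h k p - (h / s k) * \<theta> h k p))"
  by (rule smoothO_cong[OF relaxation_defect_eq(1)[OF assms] smoothO_cmult[OF smoothO_m_star_minus_m_theta]])
    (use assms in simp)

lemma smoothO_m_star_expansion:
  assumes "CARD('d) < k" "k \<le> J"
  shows "smoothO 2 (\<lambda>h p. m_star h k p - (m_eq h k p - (1 / s k - 1) * h * \<theta> h k p))"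
  by (rule smoothO_cong[OF relaxation_defect_eq(2)[OF assms] smoothO_cmult[OF smoothO_m_star_minus_m_theta]])
    (use assms in simp)

lemma f_star_minus_f_eq:
  assumes "j \<le> J"
  shows "f_star h j p - f_eq h j p
      = (\<Sum>k\<in>{CARD('d)+1..J}. Minv j k * (m_star h k p - m_eq h k p))"
proof -
  have "f_star h j p - f_eq h j p = (\<Sum>k\<le>J. Minv j k * (m_star h k p - m_eq h k p))"
    unfolding fstar_def f_eq_from_moments[OF assms] by (simp add: sum_subtractf right_diff_distrib)
  also have "\<dots> = (\<Sum>k\<in>{CARD('d)+1..J}. Minv j k * (m_star h k p - m_eq h k p))"
    by (rule sum.mono_neutral_right) (auto simp: m_star_conserved meq_conserved)
  finally show ?thesis .
qed

lemma smoothO_f_star_expansion: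
  assumes "j \<le> J"
  shows "smoothO 2 (\<lambda>h p. f_star h j p - (f_eq h j p
      - h * (\<Sum>k\<in>{CARD('d)+1..J}. (1 / s k - 1) * Minv j k * \<theta> h k p)))"
proof (rule smoothO_cong)
  show "f_star h j p - (f_eq h j p - h * (\<Sum>k\<in>{CARD('d)+1..J}. (1 / s k - 1) * Minv j k * \<theta> h k p))
      = (\<Sum>k\<in>{CARD('d)+1..J}. Minv j k * (m_star h k p - (m_eq h k p - (1 / s k - 1) * h * \<theta> h k p)))"
    for h p
  proof -
    have "f_star h j p - (f_eq h j p - h * (\<Sum>k\<in>{CARD('d)+1..J}. (1 / s k - 1) * Minv j k * \<theta> h k p))
        = (f_star h j p - f_eq h j p) + h * (\<Sum>k\<in>{CARD('d)+1..J}. (1 / s k - 1) * Minv j k * \<theta> h k p)"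
      by simp
    also have "\<dots> = (\<Sum>k\<in>{CARD('d)+1..J}. Minv j k * (m_star h k p - m_eq h k p) + h * ((1 / s k - 1) * Minv j k * \<theta> h k p))"
      unfolding f_star_minus_f_eq[OF assms] by (simp add: sum.distrib sum_distrib_left)
    also have "\<dots> = (\<Sum>k\<in>{CARD('d)+1..J}. Minv j k * (m_star h k p - (m_eq h k p - (1 / s k - 1) * h * \<theta> h k p)))"
      by (intro sum.cong) (simp_all add: algebra_simps)
    finally show ?thesis .
  qed
  show "smoothO 2 (\<lambda>h p. \<Sum>k\<in>{CARD('d)+1..J}.
      Minv j k * (m_star h k p - (m_eq h k p - (1 / s k - 1) * h * \<theta> h k p)))"
    by (intro smoothO_sum smoothO_cmult smoothO_m_star_expansion) auto
qed

lemma px_f_star_expansion: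
  assumes "j \<le> J"
  shows "bigO 2 (\<lambda>h p. px \<beta> (f_star h j) p - (px \<beta> (f_eq h j) p
      - h * (\<Sum>k\<in>{CARD('d)+1..J}. (1 / s k - 1) * Minv j k * px \<beta> (\<theta> h k) p)))"
proof (rule smoothO_bigO[OF smoothO_cong[OF _ smoothO_dirD[OF smoothO_f_star_expansion[OF assms] space_in_Basis]]])
  fix h :: real and p
  assume "0 < h"
  define S where "S p = (\<Sum>k\<in>{CARD('d)+1..J}. (1 / s k - 1) * Minv j k * \<theta> h k p)" for p
  define b :: "(real^'d) \<times> real" where "b = (axis \<beta> 1, 0)"
  have b: "b \<in> Basis"
    unfolding b_def by (rule space_in_Basis)
  have "f_star h j = (\<lambda>p. f h j (p + h *\<^sub>R (v j, 1)))"
    by (intro ext f_star_eq_shift[OF \<open>0 < h\<close> assms])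
  then have sm_star: "smooth_fun (f_star h j)"
    using smooth_fun_shift[OF smoothO_smooth_fun[OF smoothO_f[OF assms] \<open>0 < h\<close>]] by simp
  have sm_eq: "smooth_fun (f_eq h j)"
    using smoothO_smooth_fun[OF smoothO_f_eq[OF assms] \<open>0 < h\<close>] .
  have sm_theta: "smooth_fun (\<theta> h k)" for k
    using smoothO_smooth_fun[OF smoothO_theta \<open>0 < h\<close>] .
  have sm_S: "smooth_fun S"
    unfolding S_def[abs_def] by (intro smooth_fun_sum smooth_fun_cmult sm_theta) simp
  have "dirD b S p = (\<Sum>k\<in>{CARD('d)+1..J}. (1 / s k - 1) * Minv j k * dirD b (\<theta> h k) p)"
    unfolding S_def[abs_def] using b
    by (simp add: dirD_sum smooth_fun_cmult sm_theta dirD_cmult)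
  moreover have "dirD b (\<lambda>p. f_star h j p - (f_eq h j p - h * S p)) p
      = dirD b (f_star h j) p - (dirD b (f_eq h j) p - h * dirD b S p)"
    using b by (simp add: dirD_diff dirD_cmult sm_star sm_eq sm_S smooth_fun_diff smooth_fun_cmult)
  ultimately show "px \<beta> (f_star h j) p - (px \<beta> (f_eq h j) p
      - h * (\<Sum>k\<in>{CARD('d)+1..J}. (1 / s k - 1) * Minv j k * px \<beta> (\<theta> h k) p))
    = dirD (axis \<beta> 1, 0) (\<lambda>p. f_star h j p - (f_eq h j p
      - h * (\<Sum>k\<in>{CARD('d)+1..J}. (1 / s k - 1) * Minv j k * \<theta> h k p))) p"
    unfolding px_def S_def b_def by simp
qed

end

theorem proposition5:
  fixes J :: nat and lam :: real
    and e :: "nat \<Rightarrow> real^'d::finite"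
    and \<iota> :: "nat \<Rightarrow> 'd"
    and M Minv :: "nat \<Rightarrow> nat \<Rightarrow> real"
    and G :: "nat \<Rightarrow> real \<times> (real^'d) \<Rightarrow> real"
    and s :: "nat \<Rightarrow> real"
    and f :: "real \<Rightarrow> nat \<Rightarrow> (real^'d) \<times> real \<Rightarrow> real"
  defines "v \<equiv> (\<lambda>j. lam *\<^sub>R e j)"
  assumes lam_pos: "0 < lam"
    and J_ge: "CARD('d) \<le> J"
    and iota: "bij_betw \<iota> {1..CARD('d)} UNIV"
    and M0: "\<forall>j\<le>J. M 0 j = 1"
    and Malpha: "\<forall>\<alpha>\<in>{1..CARD('d)}. \<forall>j\<le>J. M \<alpha> j = v j $ \<iota> \<alpha>"
    and Minv_left: "\<forall>i\<le>J. \<forall>l\<le>J. (\<Sum>k\<le>J. Minv i k * M k l) = (if i = l then 1 else 0)"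
    and Minv_right: "\<forall>i\<le>J. \<forall>l\<le>J. (\<Sum>k\<le>J. M i k * Minv k l) = (if i = l then 1 else 0)"
    and G_smooth: "\<forall>j\<le>J. smooth_fun (G j)"
    and G_mass: "\<forall>\<rho> q. (\<Sum>j\<le>J. G j (\<rho>, q)) = \<rho>"
    and G_mom: "\<forall>\<rho> q. \<forall>\<alpha>\<in>{1..CARD('d)}. (\<Sum>j\<le>J. v j $ \<iota> \<alpha> * G j (\<rho>, q)) = q $ \<iota> \<alpha>"
    and s_range: "\<forall>k. CARD('d) + 1 \<le> k \<and> k \<le> J \<longrightarrow> 0 < s k \<and> s k \<le> 2"
    and f_smooth: "\<forall>h>0. \<forall>j\<le>J. smooth_fun (f h j)"
    and f_bounded: "\<forall>j\<le>J. bigO 0 (\<lambda>h. f h j)"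
    and advection: "\<forall>h>0. \<forall>j\<le>J. \<forall>x t.
        f h j (x, t + h) = fstar J M Minv G s \<iota> f h j (x - h *\<^sub>R v j, t)"
  shows "(\<forall>k. CARD('d) + 1 \<le> k \<and> k \<le> J \<longrightarrow>
            bigO 2 (\<lambda>h p. mom J M f h k p
                 - (meq J M G \<iota> f h k p - (h / s k) * theta J M G v \<iota> f h k p)))
       \<and> (\<forall>k. CARD('d) + 1 \<le> k \<and> k \<le> J \<longrightarrow>
            bigO 2 (\<lambda>h p. mstar J M G s \<iota> f h k p
                 - (meq J M G \<iota> f h k p - (1 / s k - 1) * h * theta J M G v \<iota> f h k p)))
       \<and> (\<forall>j\<le>J. \<forall>\<beta>. 
            bigO 2 (\<lambda>h p. px \<beta> (fstar J M Minv G s \<iota> f h j) p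
                 - (px \<beta> (feq J M G \<iota> f h j) p
                    - h * (\<Sum>k\<in>{CARD('d)+1..J}. (1 / s k - 1) * Minv j k
                                  * px \<beta> (theta J M G v \<iota> f h k) p))))"
proof -
  interpret lbm_scheme J M Minv G s \<iota> v f
  proof
    show "meq J M G \<iota> f h k p = mom J M f h k p" if "k \<le> CARD('d)" for h k p
      using meq_eq_mom_if_conserved[OF iota M0 Malpha G_mass G_mom that] .
    show "smoothO 0 (\<lambda>h. f h j)" if "j \<le> J" for j
      unfolding smoothO_def using f_smooth f_bounded that by blast
  qed (use Minv_left Minv_right s_range advection in auto)
  show ?thesis
    using smoothO_bigO[OF smoothO_m_expansion] smoothO_bigO[OF smoothO_m_star_expansion]
      px_f_star_expansion by simp
qed

end
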